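(* Let $(\Omega,\mathcal{F},\mathbb{P})$ be a nonatomic probability space, let $\delta:[0,1]\to[0,1]$ be concave and increasing with $\delta(0)=0$, $\delta(1)=1$, and let $\mathcal{A}_\delta=\{X\in L^\infty:\rho_\delta(X)\le0\}$. Let $S=(S_0,S_T)$ be a traded asset with $S_T\in L^\infty$. Then $\rho_{\mathcal{A}_\delta,S}$ is finite-valued (hence continuous) on $L^\infty$ if and only if $\delta(F_{S_T}(x))<1$ for some $x>0$. In particular, if $\delta$ is strictly increasing on some left neighborhood of $1$, then $\rho_{\mathcal{A}_\delta,S}$ is finite-valued on $L^\infty$.
   Context: $F_X$ is the distribution function of $X$. The distortion risk measure is $\rho_\delta(X)=\int_{-\infty}^0\delta(F_X(x))\,dx-\int_0^\infty(1-\delta(F_X(x)))\,dx$ for $X\in L^\infty$. A traded asset is $S=(S_0,S_T)$ with $S_0>0$, $S_T\ge0$ a.s., $S_T\ne0$. For $\mathcal{B}\subset L^\infty$, $\rho_{\mathcal{B},S}(X)=\inf\{m\in\mathbb{R}:X+\frac{m}{S_0}S_T\in\mathcal{B}\}$. *)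

theory Defs
  imports "HOL-Probability.Probability"
begin

definition nonatomic :: "'a measure \<Rightarrow> bool" where
  "nonatomic M \<longleftrightarrow> (\<forall>A\<in>sets M. 0 < measure M A \<longrightarrow>
     (\<exists>B\<in>sets M. B \<subseteq> A \<and> 0 < measure M B \<and> measure M B < measure M A))"

definition Linf :: "'a measure \<Rightarrow> ('a \<Rightarrow> real) set" where
  "Linf M = {X. X \<in> borel_measurable M \<and> (\<exists>C. AE \<omega> in M. \<bar>X \<omega>\<bar> \<le> C)}"

definition distr_fun :: "'a measure \<Rightarrow> ('a \<Rightarrow> real) \<Rightarrow> real \<Rightarrow> real" where
  "distr_fun M X x = measure M {\<omega> \<in> space M. X \<omega> \<le> x}"

definition rho_dist :: "'a measure \<Rightarrow> (real \<Rightarrow> real) \<Rightarrow> ('a \<Rightarrow> real) \<Rightarrow> real" where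
  "rho_dist M \<delta> X =
     (LINT x:{..0}|lborel. \<delta> (distr_fun M X x))
     - (LINT x:{0..}|lborel. 1 - \<delta> (distr_fun M X x))"

definition acc_dist :: "'a measure \<Rightarrow> (real \<Rightarrow> real) \<Rightarrow> ('a \<Rightarrow> real) set" where
  "acc_dist M \<delta> = {X \<in> Linf M. rho_dist M \<delta> X \<le> 0}"

text \<open>Risk measure rho_{B,S}, extended-real valued (Inf of the empty set is +infinity).\<close>
definition rho_BS :: "('a \<Rightarrow> real) set \<Rightarrow> real \<Rightarrow> ('a \<Rightarrow> real) \<Rightarrow> ('a \<Rightarrow> real) \<Rightarrow> ereal" where
  "rho_BS B S0 ST X = Inf (ereal ` {m. (\<lambda>\<omega>. X \<omega> + m / S0 * ST \<omega>) \<in> B})"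

definition finite_valued_on_Linf :: "'a measure \<Rightarrow> (('a \<Rightarrow> real) \<Rightarrow> ereal) \<Rightarrow> bool" where
  "finite_valued_on_Linf M \<rho> \<longleftrightarrow> (\<forall>X\<in>Linf M. \<bar>\<rho> X\<bar> \<noteq> \<infinity>)"

end

theory Submission imports Defs begin

text \<open>
  Let \<open>F\<close> be the distribution function of \<open>S_T\<close>, let \<open>|X| \<le> C\<close> and
  \<open>Y = X + l S_T\<close>. If \<open>\<delta>(F(x0)) < 1\<close> for some \<open>x0 > 0\<close>, then for large \<open>l\<close> the event
  \<open>Y \<le> t\<close>, \<open>t \<in> [0,b]\<close>, forces \<open>S_T \<le> x0\<close>, so \<open>1 - \<delta>(F_Y) \<ge> 1 - \<delta>(F(x0)) > 0\<close> on
  \<open>[0,b]\<close> and \<open>\<rho>_\<delta>(Y) \<le> 0\<close> once \<open>b\<close> is large. For very negative \<open>l\<close>, \<open>Y \<le> t\<close> holds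
  for all \<open>t \<ge> C + l x0\<close> on \<open>{S_T > x0}\<close>, an event of probability \<open>p > 0\<close>; concavity
  gives \<open>\<delta>(p) \<ge> p\<close>, so \<open>\<rho>_\<delta>(Y) > 0\<close>. Hence the acceptable multiples form a nonempty
  set bounded below. If instead \<open>\<delta>(F(x)) = 1\<close> for all \<open>x > 0\<close>, every \<open>Y = -1 + l S_T\<close>
  has \<open>\<delta>(F_Y) = 1\<close> on \<open>(-1,\<infinity>)\<close>, hence \<open>\<rho>_\<delta>(Y) \<ge> 1/2\<close>, and the risk of \<open>X = -1\<close> is
  \<open>+\<infinity>\<close>.
\<close>

lemma concave_on_ge_diagonal:
  fixes \<delta> :: "real \<Rightarrow> real"
  assumes "concave_on {0..1} \<delta>" "\<delta> 0 = 0" "\<delta> 1 = 1" "p \<in> {0..1}"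
  shows "p \<le> \<delta> p"
  using concave_onD[OF assms(1), of p 0 1] assms(2-4) by simp

lemma Inf_ereal_finite:
  fixes S :: "real set"
  assumes "x \<in> S" and "\<And>m. m \<in> S \<Longrightarrow> L \<le> m"
  shows "\<bar>Inf (ereal ` S)\<bar> \<noteq> \<infinity>"
proof -
  have "Inf (ereal ` S) \<le> ereal x" using assms(1) by (simp add: INF_lower)
  moreover have "ereal L \<le> Inf (ereal ` S)" using assms(2) by (simp add: INF_greatest)
  ultimately show ?thesis by (cases "Inf (ereal ` S)") auto
qed

lemma LinfE:
  assumes "X \<in> Linf M"
  obtains C where "0 \<le> C" and "AE \<omega> in M. \<bar>X \<omega>\<bar> \<le> C" and "X \<in> borel_measurable M"
proof -
  obtain C where "AE \<omega> in M. \<bar>X \<omega>\<bar> \<le> C" and "X \<in> borel_measurable M"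
    using assms unfolding Linf_def by auto
  moreover from this(1) have "AE \<omega> in M. \<bar>X \<omega>\<bar> \<le> \<bar>C\<bar>" by eventually_elim auto
  ultimately show thesis using that[of "\<bar>C\<bar>"] by simp
qed

lemma Linf_const: "(\<lambda>_. c) \<in> Linf M"
  unfolding Linf_def by auto

lemma Linf_add_scaled:
  assumes "X \<in> Linf M" and "Z \<in> Linf M"
  shows "(\<lambda>\<omega>. X \<omega> + l * Z \<omega>) \<in> Linf M"
proof -
  obtain C K where C: "AE \<omega> in M. \<bar>X \<omega>\<bar> \<le> C" and K: "AE \<omega> in M. \<bar>Z \<omega>\<bar> \<le> K"
    using assms unfolding Linf_def by auto
  have "AE \<omega> in M. \<bar>X \<omega> + l * Z \<omega>\<bar> \<le> C + \<bar>l\<bar> * K" using C K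
  proof eventually_elim
    case (elim \<omega>)
    then have "\<bar>l * Z \<omega>\<bar> \<le> \<bar>l\<bar> * K" by (simp add: abs_mult mult_left_mono)
    then show ?case using elim(1) abs_triangle_ineq[of "X \<omega>" "l * Z \<omega>"] by linarith
  qed
  then show ?thesis using assms unfolding Linf_def by auto
qed

lemma integral_lborel_const_indicator:
  "(a::real) \<le> b \<Longrightarrow> (LINT x|lborel. c * indicator {a..b} x) = c * (b - a)"
  by (simp add: measure_lborel_Icc)

lemma integrable_const_indicator: "integrable lborel (\<lambda>x. c * indicator {a..b::real} x :: real)"
  by (intro integrable_mult_right integrable_real_indicator) (auto simp: emeasure_lborel_Icc_eq)

lemma sets_distr_fun_level:
  "(Y :: _ \<Rightarrow> real) \<in> borel_measurable M \<Longrightarrow> {\<omega> \<in> space M. Y \<omega> \<le> x} \<in> sets M"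
  by (simp add: borel_measurable_iff_le)

context prob_space
begin

lemma distr_fun_bounds: "distr_fun M Y x \<in> {0..1}"
  unfolding distr_fun_def by simp

lemma distr_fun_mono:
  assumes "Y \<in> borel_measurable M" and "x \<le> y"
  shows "distr_fun M Y x \<le> distr_fun M Y y"
  unfolding distr_fun_def
  by (rule finite_measure_mono) (use assms sets_distr_fun_level in auto)

lemma distr_fun_eq_0:
  assumes "Y \<in> borel_measurable M" and "AE \<omega> in M. a \<le> Y \<omega>" and "x < a"
  shows "distr_fun M Y x = 0"
proof -
  have "AE \<omega> in M. \<not> Y \<omega> \<le> x" using assms(2) by eventually_elim (use assms(3) in auto)
  then show ?thesis
    unfolding distr_fun_def using prob_Collect_eq_0[OF sets_distr_fun_level[OF assms(1)]] by simp
qed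

lemma distr_fun_eq_1:
  assumes "Y \<in> borel_measurable M" and "AE \<omega> in M. Y \<omega> \<le> b" and "b \<le> x"
  shows "distr_fun M Y x = 1"
proof -
  have "AE \<omega> in M. Y \<omega> \<le> x" using assms(2) by eventually_elim (use assms(3) in auto)
  then show ?thesis
    unfolding distr_fun_def using prob_Collect_eq_1[OF sets_distr_fun_level[OF assms(1)]] by simp
qed

lemma prob_greater_eq_1_minus_distr_fun:
  assumes "Y \<in> borel_measurable M"
  shows "measure M {\<omega> \<in> space M. x < Y \<omega>} = 1 - distr_fun M Y x"
proof -
  have "{\<omega> \<in> space M. x < Y \<omega>} = space M - {\<omega> \<in> space M. Y \<omega> \<le> x}" by auto
  then show ?thesis
    using prob_compl[OF sets_distr_fun_level[OF assms]] by (simp add: distr_fun_def)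
qed

lemma ex_distr_fun_less_1:
  assumes "Y \<in> borel_measurable M" and "AE \<omega> in M. Y \<omega> \<ge> 0" and "\<not> (AE \<omega> in M. Y \<omega> = 0)"
  shows "\<exists>x>0. distr_fun M Y x < 1"
proof (rule ccontr)
  assume none: "\<not> ?thesis"
  have "distr_fun M Y (1 / Suc n) = 1" for n :: nat
  proof -
    have "1 / real (Suc n) > 0" by simp
    then have "\<not> distr_fun M Y (1 / Suc n) < 1" using none by blast
    then show ?thesis using distr_fun_bounds[of Y "1 / Suc n"] by simp
  qed
  then have "AE \<omega> in M. Y \<omega> \<le> 1 / Suc n" for n :: nat
    unfolding distr_fun_def using prob_Collect_eq_1[OF sets_distr_fun_level[OF assms(1)]] by auto
  then have "AE \<omega> in M. \<forall>n::nat. Y \<omega> \<le> 1 / Suc n"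
    by (simp add: AE_all_countable)
  then have "AE \<omega> in M. Y \<omega> = 0" using assms(2)
  proof eventually_elim
    case (elim \<omega>)
    show ?case
    proof (rule ccontr)
      assume "Y \<omega> \<noteq> 0"
      with elim(2) have "0 < Y \<omega>" by simp
      then obtain n where "inverse (real (Suc n)) < Y \<omega>"
        using reals_Archimedean by blast
      with elim(1) show False by (metis inverse_eq_divide not_le)
    qed
  qed
  with assms(3) show False by simp
qed

end

locale distortion = prob_space +
  fixes \<delta> :: "real \<Rightarrow> real"
  assumes distortion_mono: "mono_on {0..1} \<delta>"
    and distortion_range: "\<delta> ` {0..1} \<subseteq> {0..1}"
    and distortion_0: "\<delta> 0 = 0"
    and distortion_1: "\<delta> 1 = 1"
begin

lemma distorted_bounds: "0 \<le> \<delta> (distr_fun M Y x)" "\<delta> (distr_fun M Y x) \<le> 1"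
  using subsetD[OF distortion_range imageI[OF distr_fun_bounds[of Y x]]] by auto

lemma distorted_mono_le:
  assumes "p \<le> distr_fun M Y x" and "p \<in> {0..1}"
  shows "\<delta> p \<le> \<delta> (distr_fun M Y x)"
  using assms distr_fun_bounds[of Y x] by (intro mono_onD[OF distortion_mono]) auto

lemma distorted_mono_ge:
  assumes "distr_fun M Y x \<le> p" and "p \<in> {0..1}"
  shows "\<delta> (distr_fun M Y x) \<le> \<delta> p"
  using assms distr_fun_bounds[of Y x] by (intro mono_onD[OF distortion_mono]) auto

lemma borel_measurable_distorted:
  assumes "Y \<in> borel_measurable M"
  shows "(\<lambda>x. \<delta> (distr_fun M Y x)) \<in> borel_measurable lborel"
proof -
  have "mono (\<lambda>x. \<delta> (distr_fun M Y x))"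
    by (intro monoI distorted_mono_le distr_fun_mono[OF assms] distr_fun_bounds)
  then show ?thesis using borel_measurable_mono by simp
qed

lemma integrable_distorted:
  assumes "Y \<in> Linf M"
  shows "integrable lborel (\<lambda>x. indicator {..0} x * \<delta> (distr_fun M Y x))"
    and "integrable lborel (\<lambda>x. indicator {0..} x * (1 - \<delta> (distr_fun M Y x)))"
proof -
  obtain K where K: "AE \<omega> in M. \<bar>Y \<omega>\<bar> \<le> K" and Y: "Y \<in> borel_measurable M"
    using assms by (rule LinfE)
  have lo: "AE \<omega> in M. - K \<le> Y \<omega>" and hi: "AE \<omega> in M. Y \<omega> \<le> K"
    using K by (eventually_elim, auto)+
  note meas = borel_measurable_distorted[OF Y]
  show "integrable lborel (\<lambda>x. indicator {..0} x * \<delta> (distr_fun M Y x))"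
  proof (rule Bochner_Integration.integrable_bound[OF integrable_const_indicator[of 1 "- K" 0]])
    show "(\<lambda>x. indicator {..0} x * \<delta> (distr_fun M Y x)) \<in> borel_measurable lborel"
      using meas by measurable
    have "\<bar>indicator {..0} x * \<delta> (distr_fun M Y x)\<bar> \<le> indicator {- K..0} x" for x :: real
      using distr_fun_eq_0[OF Y lo, of x] distortion_0 distorted_bounds[of Y x]
      by (cases "x < - K") (auto simp: indicator_def)
    then show "AE x in lborel. norm (indicator {..0} x * \<delta> (distr_fun M Y x))
        \<le> norm (1 * indicator {- K..0} x :: real)"
      by simp
  qed
  show "integrable lborel (\<lambda>x. indicator {0..} x * (1 - \<delta> (distr_fun M Y x)))"
  proof (rule Bochner_Integration.integrable_bound[OF integrable_const_indicator[of 1 0 "K"]])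
    show "(\<lambda>x. indicator {0..} x * (1 - \<delta> (distr_fun M Y x))) \<in> borel_measurable lborel"
      using meas by measurable
    have "\<bar>indicator {0..} x * (1 - \<delta> (distr_fun M Y x))\<bar> \<le> indicator {0..K} x" for x :: real
      using distr_fun_eq_1[OF Y hi, of x] distortion_1 distorted_bounds[of Y x]
      by (cases "K \<le> x") (auto simp: indicator_def)
    then show "AE x in lborel. norm (indicator {0..} x * (1 - \<delta> (distr_fun M Y x)))
        \<le> norm (1 * indicator {0..K} x :: real)"
      by simp
  qed
qed

lemma rho_dist_eq:
  "rho_dist M \<delta> Y = (LINT x|lborel. indicator {..0} x * \<delta> (distr_fun M Y x))
     - (LINT x|lborel. indicator {0..} x * (1 - \<delta> (distr_fun M Y x)))"
  unfolding rho_dist_def set_lebesgue_integral_def by simp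

lemma rho_dist_ge:
  assumes "Y \<in> Linf M" and "a \<le> 0" and "0 \<le> b"
    and "\<And>t. a \<le> t \<Longrightarrow> t \<le> 0 \<Longrightarrow> c \<le> \<delta> (distr_fun M Y t)"
    and "\<And>t. b < t \<Longrightarrow> \<delta> (distr_fun M Y t) = 1"
  shows "- a * c - b \<le> rho_dist M \<delta> Y"
proof -
  note I = integrable_distorted[OF assms(1)]
  have "c * (0 - a) \<le> (LINT x|lborel. indicator {..0} x * \<delta> (distr_fun M Y x))"
    unfolding integral_lborel_const_indicator[OF assms(2), symmetric]
    by (rule integral_mono[OF integrable_const_indicator I(1)])
      (use assms(4) distorted_bounds in \<open>auto simp: indicator_def\<close>)
  moreover have "(LINT x|lborel. indicator {0..} x * (1 - \<delta> (distr_fun M Y x))) \<le> 1 * (b - 0)"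
    unfolding integral_lborel_const_indicator[OF assms(3), symmetric]
    by (rule integral_mono[OF I(2) integrable_const_indicator])
      (use assms(5) distorted_bounds in \<open>auto simp: indicator_def not_less\<close>)
  ultimately show ?thesis unfolding rho_dist_eq by (simp add: mult.commute)
qed

lemma rho_dist_le:
  assumes "Y \<in> Linf M" and "a \<le> 0" and "0 \<le> b"
    and "\<And>t. t < a \<Longrightarrow> \<delta> (distr_fun M Y t) = 0"
    and "\<And>t. 0 \<le> t \<Longrightarrow> t \<le> b \<Longrightarrow> \<delta> (distr_fun M Y t) \<le> d"
  shows "rho_dist M \<delta> Y \<le> - a - b * (1 - d)"
proof -
  note I = integrable_distorted[OF assms(1)]
  have "(LINT x|lborel. indicator {..0} x * \<delta> (distr_fun M Y x)) \<le> 1 * (0 - a)"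
    unfolding integral_lborel_const_indicator[OF assms(2), symmetric]
    by (rule integral_mono[OF I(1) integrable_const_indicator])
      (use assms(4) distorted_bounds in \<open>auto simp: indicator_def not_less\<close>)
  moreover have "(1 - d) * (b - 0) \<le> (LINT x|lborel. indicator {0..} x * (1 - \<delta> (distr_fun M Y x)))"
    unfolding integral_lborel_const_indicator[OF assms(3), symmetric]
    by (rule integral_mono[OF integrable_const_indicator I(2)])
      (use assms(5) distorted_bounds in \<open>auto simp: indicator_def\<close>)
  ultimately show ?thesis unfolding rho_dist_eq by (simp add: algebra_simps)
qed

lemma ex_acceptable_scaled:
  assumes X: "X \<in> Linf M" and ST: "ST \<in> Linf M" and pos: "AE \<omega> in M. ST \<omega> \<ge> 0"
    and x0: "x0 > 0" and less_1: "\<delta> (distr_fun M ST x0) < 1"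
  shows "\<exists>l. rho_dist M \<delta> (\<lambda>\<omega>. X \<omega> + l * ST \<omega>) \<le> 0"
proof -
  obtain C where C: "0 \<le> C" "AE \<omega> in M. \<bar>X \<omega>\<bar> \<le> C" using LinfE[OF X] by blast
  have STm: "ST \<in> borel_measurable M" using ST by (rule LinfE)
  define d where "d = \<delta> (distr_fun M ST x0)"
  define b where "b = C / (1 - d)"
  define l where "l = (b + C + 1) / x0"
  define Y where "Y = (\<lambda>\<omega>. X \<omega> + l * ST \<omega>)"
  have d: "d < 1" using less_1 by (simp add: d_def)
  then have b: "0 \<le> b" using C(1) by (simp add: b_def)
  then have l: "0 < l" and lx0: "l * x0 = b + C + 1" using C(1) x0 by (simp_all add: l_def)
  have Y: "Y \<in> Linf M" and Ym: "Y \<in> borel_measurable M"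
    using Linf_add_scaled[OF X ST] LinfE unfolding Y_def by blast+
  have "rho_dist M \<delta> Y \<le> - (- C) - b * (1 - d)"
  proof (rule rho_dist_le[OF Y _ b])
    have "AE \<omega> in M. - C \<le> Y \<omega>" using C(2) pos
      by eventually_elim (use l in \<open>auto simp: Y_def abs_le_iff intro: add_increasing2\<close>)
    then show "\<delta> (distr_fun M Y t) = 0" if "t < - C" for t
      using distr_fun_eq_0[OF Ym _ that] distortion_0 by simp
    show "\<delta> (distr_fun M Y t) \<le> d" if t: "0 \<le> t" "t \<le> b" for t
    proof -
      have "AE \<omega> in M. Y \<omega> \<le> t \<longrightarrow> ST \<omega> \<le> x0" using C(2)
      proof eventually_elim
        case (elim \<omega>)
        have "l * ST \<omega> \<le> l * x0 \<Longrightarrow> ST \<omega> \<le> x0" using l by simp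
        then show ?case using elim t lx0 by (auto simp: Y_def abs_le_iff)
      qed
      then have "distr_fun M Y t \<le> distr_fun M ST x0" unfolding distr_fun_def
        by (intro finite_measure_mono_AE sets_distr_fun_level[OF STm]) auto
      then show ?thesis unfolding d_def by (rule distorted_mono_ge[OF _ distr_fun_bounds])
    qed
  qed (use C(1) in simp)
  also have "\<dots> = 0" using d by (simp add: b_def)
  finally show ?thesis unfolding Y_def by blast
qed

lemma rho_dist_pos_if_scaled_below:
  assumes X: "X \<in> Linf M" and C: "0 \<le> C" "AE \<omega> in M. \<bar>X \<omega>\<bar> \<le> C"
    and ST: "ST \<in> Linf M" and pos: "AE \<omega> in M. ST \<omega> \<ge> 0" and x0: "x0 > 0"
    and c: "c = \<delta> (measure M {\<omega> \<in> space M. x0 < ST \<omega>})" "0 < c"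
    and lL: "l * x0 < - (C + C / c + 1)"
  shows "0 < rho_dist M \<delta> (\<lambda>\<omega>. X \<omega> + l * ST \<omega>)"
proof -
  define Y where "Y = (\<lambda>\<omega>. X \<omega> + l * ST \<omega>)"
  define a where "a = C + l * x0"
  have "0 \<le> C / c" using C(1) c by simp
  then have a: "a \<le> 0" and "l * x0 < 0" using lL C(1) by (auto simp: a_def)
  then have l: "l < 0" using x0 by (simp add: mult_less_0_iff)
  have Y: "Y \<in> Linf M" and Ym: "Y \<in> borel_measurable M"
    using Linf_add_scaled[OF X ST] LinfE unfolding Y_def by blast+
  have "- a * c - C \<le> rho_dist M \<delta> Y"
  proof (rule rho_dist_ge[OF Y a C(1)])
    show "c \<le> \<delta> (distr_fun M Y t)" if t: "a \<le> t" "t \<le> 0" for t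
    proof -
      have "AE \<omega> in M. x0 < ST \<omega> \<longrightarrow> Y \<omega> \<le> t" using C(2)
      proof eventually_elim
        case (elim \<omega>)
        have "x0 < ST \<omega> \<Longrightarrow> l * ST \<omega> \<le> l * x0" using l by simp
        then show ?case using elim t by (auto simp: Y_def a_def abs_le_iff)
      qed
      then have "measure M {\<omega> \<in> space M. x0 < ST \<omega>} \<le> distr_fun M Y t"
        unfolding distr_fun_def by (intro finite_measure_mono_AE sets_distr_fun_level[OF Ym]) auto
      then show ?thesis unfolding c(1) by (intro distorted_mono_le) auto
    qed
    have "AE \<omega> in M. Y \<omega> \<le> C" using C(2) pos
    proof eventually_elim
      case (elim \<omega>)
      then show ?case using mult_nonpos_nonneg[of l "ST \<omega>"] l by (auto simp: Y_def abs_le_iff)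
    qed
    then show "\<delta> (distr_fun M Y t) = 1" if "C < t" for t
      using distr_fun_eq_1[OF Ym _ less_imp_le[OF that]] distortion_1 by simp
  qed
  moreover have "C + c < - a * c"
    using lL c by (simp add: a_def field_simps)
  ultimately show ?thesis using c unfolding Y_def by linarith
qed

lemma acceptable_scaled_bounded_below:
  assumes concave: "concave_on {0..1} \<delta>"
    and X: "X \<in> Linf M" and ST: "ST \<in> Linf M" and pos: "AE \<omega> in M. ST \<omega> \<ge> 0"
    and x0: "x0 > 0" and less_1: "distr_fun M ST x0 < 1"
  shows "\<exists>L. \<forall>l. rho_dist M \<delta> (\<lambda>\<omega>. X \<omega> + l * ST \<omega>) \<le> 0 \<longrightarrow> L \<le> l"
proof -
  obtain C where C: "0 \<le> C" "AE \<omega> in M. \<bar>X \<omega>\<bar> \<le> C" using LinfE[OF X] by blast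
  have STm: "ST \<in> borel_measurable M" using ST by (rule LinfE)
  define p where "p = measure M {\<omega> \<in> space M. x0 < ST \<omega>}"
  have p: "0 < p" "p \<le> 1"
    using less_1 prob_greater_eq_1_minus_distr_fun[OF STm] distr_fun_bounds[of ST x0]
    by (auto simp: p_def)
  define c where "c = \<delta> p"
  have c: "0 < c" using concave_on_ge_diagonal[OF concave distortion_0 distortion_1, of p] p
    by (simp add: c_def)
  have "- (C + C / c + 1) \<le> l * x0" if "rho_dist M \<delta> (\<lambda>\<omega>. X \<omega> + l * ST \<omega>) \<le> 0" for l
    using rho_dist_pos_if_scaled_below[OF X C ST pos x0 c_def[unfolded p_def] c] that
    by (meson not_less)
  then have "- (C + C / c + 1) / x0 \<le> l" if "rho_dist M \<delta> (\<lambda>\<omega>. X \<omega> + l * ST \<omega>) \<le> 0" for l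
    using that x0 by (simp add: divide_le_eq)
  then show ?thesis by blast
qed

lemma rho_dist_pos_if_distorted_eq_1:
  assumes ST: "ST \<in> Linf M" and pos: "AE \<omega> in M. ST \<omega> \<ge> 0"
    and one: "\<And>x. x > 0 \<Longrightarrow> \<delta> (distr_fun M ST x) = 1"
  shows "0 < rho_dist M \<delta> (\<lambda>\<omega>. - 1 + l * ST \<omega>)"
proof -
  define Y where "Y = (\<lambda>\<omega>. - 1 + l * ST \<omega>)"
  have Y: "Y \<in> Linf M" unfolding Y_def by (rule Linf_add_scaled[OF Linf_const ST])
  then have Ym: "Y \<in> borel_measurable M" by (rule LinfE)
  have "\<delta> (distr_fun M Y t) = 1" if t: "- 1 < t" for t
  proof (cases "l \<le> 0")
    case True
    have "AE \<omega> in M. Y \<omega> \<le> - 1" using pos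
      by eventually_elim (use True in \<open>simp add: Y_def mult_nonpos_nonneg\<close>)
    then show ?thesis using distr_fun_eq_1[OF Ym _ less_imp_le[OF t]] distortion_1 by simp
  next
    case False
    then have "{\<omega> \<in> space M. Y \<omega> \<le> t} = {\<omega> \<in> space M. ST \<omega> \<le> (t + 1) / l}"
      by (auto simp: Y_def pos_le_divide_eq algebra_simps)
    moreover have "(t + 1) / l > 0" using False t by simp
    ultimately show ?thesis using one unfolding distr_fun_def by simp
  qed
  then have "- (- 1 / 2) * 1 - 0 \<le> rho_dist M \<delta> Y"
    by (intro rho_dist_ge[OF Y]) auto
  then show ?thesis unfolding Y_def by simp
qed

lemma ex_distorted_less_1_if_finite_valued:
  assumes S0: "S0 > 0" and ST: "ST \<in> Linf M" and pos: "AE \<omega> in M. ST \<omega> \<ge> 0"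
    and finite: "finite_valued_on_Linf M (rho_BS (acc_dist M \<delta>) S0 ST)"
  shows "\<exists>x>0. \<delta> (distr_fun M ST x) < 1"
proof (rule ccontr)
  assume none: "\<not> ?thesis"
  have "\<delta> (distr_fun M ST x) = 1" if "x > 0" for x
  proof -
    have "\<not> \<delta> (distr_fun M ST x) < 1" using none that by blast
    then show ?thesis using distorted_bounds[of ST x] by simp
  qed
  then have "(\<lambda>\<omega>. - 1 + m / S0 * ST \<omega>) \<notin> acc_dist M \<delta>" for m
    using rho_dist_pos_if_distorted_eq_1[OF ST pos, of "m / S0"] by (auto simp: acc_dist_def)
  then have "rho_BS (acc_dist M \<delta>) S0 ST (\<lambda>_. - 1) = \<infinity>"
    by (simp add: rho_BS_def top_ereal_def)
  with finite Linf_const[of "- 1" M] show False unfolding finite_valued_on_Linf_def by force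
qed

lemma finite_valued_if_distorted_less_1:
  assumes concave: "concave_on {0..1} \<delta>" and S0: "S0 > 0"
    and ST: "ST \<in> Linf M" and pos: "AE \<omega> in M. ST \<omega> \<ge> 0"
    and x0: "x0 > 0" and less_1: "\<delta> (distr_fun M ST x0) < 1"
  shows "finite_valued_on_Linf M (rho_BS (acc_dist M \<delta>) S0 ST)"
  unfolding finite_valued_on_Linf_def
proof
  fix X assume X: "X \<in> Linf M"
  define A where "A = {m. (\<lambda>\<omega>. X \<omega> + m / S0 * ST \<omega>) \<in> acc_dist M \<delta>}"
  have A_iff: "m \<in> A \<longleftrightarrow> rho_dist M \<delta> (\<lambda>\<omega>. X \<omega> + m / S0 * ST \<omega>) \<le> 0" for m
    using Linf_add_scaled[OF X ST, of "m / S0"] by (simp add: A_def acc_dist_def)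
  obtain l where "rho_dist M \<delta> (\<lambda>\<omega>. X \<omega> + l * ST \<omega>) \<le> 0"
    using ex_acceptable_scaled[OF X ST pos x0 less_1] by blast
  then have "l * S0 \<in> A" using S0 by (simp add: A_iff)
  have "distr_fun M ST x0 < 1" using less_1 distortion_1 distr_fun_bounds[of ST x0]
    by (cases "distr_fun M ST x0 = 1") auto
  then obtain L where L: "\<And>l. rho_dist M \<delta> (\<lambda>\<omega>. X \<omega> + l * ST \<omega>) \<le> 0 \<Longrightarrow> L \<le> l"
    using acceptable_scaled_bounded_below[OF concave X ST pos x0] by blast
  have "L * S0 \<le> m" if "m \<in> A" for m
    using L[of "m / S0"] that S0 by (simp add: A_iff pos_le_divide_eq)
  with \<open>l * S0 \<in> A\<close> show "\<bar>rho_BS (acc_dist M \<delta>) S0 ST X\<bar> \<noteq> \<infinity>"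
    unfolding rho_BS_def A_def[symmetric] by (rule Inf_ereal_finite)
qed

lemma ex_distorted_less_1_if_strict_mono_near_1:
  assumes "strict_mono_on {1 - \<epsilon>..1} \<delta>" and "\<epsilon> > 0"
    and "Y \<in> borel_measurable M" and "AE \<omega> in M. Y \<omega> \<ge> 0" and "\<not> (AE \<omega> in M. Y \<omega> = 0)"
  shows "\<exists>x>0. \<delta> (distr_fun M Y x) < 1"
proof -
  obtain x where "x > 0" and F: "distr_fun M Y x < 1"
    using ex_distr_fun_less_1[OF assms(3-5)] by blast
  have "\<delta> (distr_fun M Y x) \<le> \<delta> (max (1 - \<epsilon>) (distr_fun M Y x))"
    by (rule distorted_mono_ge) (use F assms(2) distr_fun_bounds[of Y x] in auto)
  also have "\<dots> < \<delta> 1"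
    using F distr_fun_bounds[of Y x] assms(2) by (intro strict_mono_onD[OF assms(1)]) auto
  finally show ?thesis using \<open>x > 0\<close> distortion_1 by auto
qed

end

theorem proposition8p1:
  fixes M :: "'a measure" and \<delta> :: "real \<Rightarrow> real" and S0 :: real and ST :: "'a \<Rightarrow> real"
  assumes "prob_space M" and "nonatomic M"
    and "concave_on {0..1} \<delta>" and "mono_on {0..1} \<delta>"
    and "\<delta> ` {0..1} \<subseteq> {0..1}" and "\<delta> 0 = 0" and "\<delta> 1 = 1"
    and "S0 > 0" and "ST \<in> Linf M" and "AE \<omega> in M. ST \<omega> \<ge> 0"
    and "\<not> (AE \<omega> in M. ST \<omega> = 0)"
  shows "(finite_valued_on_Linf M (rho_BS (acc_dist M \<delta>) S0 ST)
            \<longleftrightarrow> (\<exists>x>0. \<delta> (distr_fun M ST x) < 1))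
         \<and> ((\<exists>\<epsilon>>0. strict_mono_on {1 - \<epsilon>..1} \<delta>)
            \<longrightarrow> finite_valued_on_Linf M (rho_BS (acc_dist M \<delta>) S0 ST))"
proof -
  interpret distortion M \<delta>
    using assms(1,4-7) unfolding distortion_def distortion_axioms_def by simp
  have "finite_valued_on_Linf M (rho_BS (acc_dist M \<delta>) S0 ST)
      \<longleftrightarrow> (\<exists>x>0. \<delta> (distr_fun M ST x) < 1)"
    using ex_distorted_less_1_if_finite_valued[OF assms(8-10)]
      finite_valued_if_distorted_less_1[OF assms(3,8-10)] by blast
  moreover have "\<exists>x>0. \<delta> (distr_fun M ST x) < 1" if "strict_mono_on {1 - \<epsilon>..1} \<delta>" "\<epsilon> > 0" for \<epsilon>
    using ex_distorted_less_1_if_strict_mono_near_1[OF that _ assms(10,11)] assms(9) LinfE by blast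
  ultimately show ?thesis by blast
qed

end
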